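(* If $n=1$ or $n\ge3$, all zeros of $\Phi_n(x)$ other than $x=2$ are simple. For $n=2$ one has $\Phi_2(x)=3(x-2)^2(x+1)^2$.
   Context: $U_n$ is the Chebyshev polynomial of the second kind, $U_n(\cos\theta)=\sin((n+1)\theta)/\sin\theta$, $\tilde U_n(x)=U_n(x/2)$, and $\Phi_n(x)=((n+1)x^2-6x-4n)\tilde U_n(x)+2(x+2)\tilde U_{n-1}(x)+2(x+2)$. *)

theory Defs
  imports "HOL-Computational_Algebra.Polynomial"
begin

(* Chebyshev polynomials of the second kind, via the standard recurrence
   U_0 = 1, U_1 = 2x, U_{n+2} = 2x U_{n+1} - U_n
   (equivalently U_n(cos t) = sin((n+1)t)/sin t). *)
fun chebU :: "nat \<Rightarrow> complex poly" where
  "chebU 0 = 1"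
| "chebU (Suc 0) = [:0, 2:]"
| "chebU (Suc (Suc n)) = [:0, 2:] * chebU (Suc n) - chebU n"

definition chebU_tilde :: "nat \<Rightarrow> complex poly" where
  "chebU_tilde n = pcompose (chebU n) [:0, 1/2:]"

(* \<Phi>_n(x) = ((n+1)x^2 - 6x - 4n) \<tilde>U_n(x) + 2(x+2) \<tilde>U_{n-1}(x) + 2(x+2);
   only meaningful for n \<ge> 1 (n - 1 is natural-number subtraction). *)
definition Phi :: "nat \<Rightarrow> complex poly" where
  "Phi n = [:- 4 * of_nat n, -6, of_nat n + 1:] * chebU_tilde n
         + [:4, 2:] * chebU_tilde (n - 1) + [:4, 2:]"

end

(*
  Phi_n has degree at most n + 2 and a double root at 2, so it suffices to exhibit n distinct
  roots other than 2: the remaining cofactor of degree at most n then has only simple roots.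
  Substituting x = 2 cos 2p with 0 < p < pi/2 and using U_n(cos t) sin t = sin((n+1)t) gives
    Phi_n(2 cos 2p) cos p = 16 sin((n+1)p) h(p),
    h(p) = cos^3 p sin((n+1)p) - sin p ((n+2) cos^2 p - 1) cos((n+1)p).
  The zeros p = j pi/(n+1) of sin((n+1)p) give floor(n/2) roots. On the grid k pi/(2(n+1)),
  h equals (-1)^j cos^3 p at the odd points 2j+1 and (-1)^(j+1) sin p ((n+2) cos^2 p - 1) at the
  even points 2j, so h changes sign in one of the two grid cells next to every even point with
  1 <= j <= ceiling(n/2), giving the remaining ceiling(n/2) roots. This needs
  (n+2) cos^2 p - 1 to be nonzero at the even points: otherwise -2n/(n+2) would be a root of
  the monic integer polynomial U_n(x/2), hence an integer, forcing n = 2.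
*)

theory Submission
  imports Defs
begin

lemma order_eq_1_if_double_root_and_enough_roots:
  fixes p :: "'a::idom poly"
  assumes "p \<noteq> 0" and "[:-a, 1:] ^ 2 dvd p" and "degree p \<le> card X + 2"
    and "finite X" and "a \<notin> X" and "\<forall>x\<in>X. poly p x = 0"
    and "poly p z = 0" and "z \<noteq> a"
  shows "order z p = 1"
proof -
  obtain q where p: "p = [:-a, 1:] ^ 2 * q"
    using assms(2) ..
  have "q \<noteq> 0"
    using assms(1) p by auto
  have roots_q: "poly q x = 0" if "poly p x = 0" "x \<noteq> a" for x
    using that p by simp
  define R where "R = {x. poly q x = 0}"
  have "finite R"
    unfolding R_def using \<open>q \<noteq> 0\<close> by (rule poly_roots_finite)
  have "z \<in> R" "X \<subseteq> R"
    using assms(5-8) roots_q unfolding R_def by auto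
  have order_z: "order z p = order z q"
    using p \<open>q \<noteq> 0\<close> assms(8) by (simp add: order_mult order_0I)
  have "order z q + (card R - 1) \<le> (\<Sum>x\<in>R. order x q)"
  proof -
    have "card (R - {z}) \<le> (\<Sum>x\<in>R - {z}. order x q)"
      using sum_mono[of "R - {z}" "\<lambda>_. 1::nat" "\<lambda>x. order x q"] \<open>q \<noteq> 0\<close>
      unfolding R_def by (simp add: order_root Suc_le_eq)
    then show ?thesis
      using sum.remove[OF \<open>finite R\<close> \<open>z \<in> R\<close>, of "\<lambda>x. order x q"] \<open>finite R\<close> \<open>z \<in> R\<close>
      by simp
  qed
  also have "\<dots> \<le> degree q"
    using sum_order_le_degree[OF \<open>q \<noteq> 0\<close>] unfolding R_def .
  also have "\<dots> \<le> card X"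
    using assms(3) p \<open>q \<noteq> 0\<close> by (simp add: degree_mult_eq degree_power_eq)
  also have "\<dots> \<le> card R"
    using \<open>X \<subseteq> R\<close> \<open>finite R\<close> by (rule card_mono[rotated])
  finally have "order z q \<le> 1"
    using \<open>z \<in> R\<close> \<open>finite R\<close> card_gt_0_iff[of R] by linarith
  moreover have "order z q \<noteq> 0"
    using \<open>z \<in> R\<close> \<open>q \<noteq> 0\<close> unfolding R_def by (simp add: order_root)
  ultimately show ?thesis
    using order_z by simp
qed

lemma square_linear_dvd_if_poly_pderiv_eq_0:
  fixes p :: "'a::idom poly"
  assumes "poly p a = 0" and "poly (pderiv p) a = 0"
  shows "[:-a, 1:] ^ 2 dvd p"
proof -
  obtain r where r: "p = [:-a, 1:] * r"
    using assms(1) by (auto simp: poly_eq_0_iff_dvd elim: dvdE)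
  have "poly r a = poly (pderiv p) a"
    by (simp only: r pderiv_mult poly_add poly_mult) (simp add: pderiv_pCons)
  then obtain s where "r = [:-a, 1:] * s"
    using assms(2) by (auto simp: poly_eq_0_iff_dvd elim: dvdE)
  with r have "p = [:-a, 1:] ^ 2 * s"
    by (simp only: power2_eq_square mult.assoc)
  then show ?thesis ..
qed

lemma IVT_sign_change:
  fixes f :: "real \<Rightarrow> real"
  assumes "continuous_on {a..b} f" and "a \<le> b" and "f a * f b < 0"
  shows "\<exists>c. a < c \<and> c < b \<and> f c = 0"
proof -
  have "f a \<noteq> 0" "f b \<noteq> 0"
    using assms(3) by auto
  have "\<exists>c. a \<le> c \<and> c \<le> b \<and> f c = 0"
  proof (cases "f a < 0")
    case True
    with assms(3) have "0 < f b"
      by (simp add: mult_less_0_iff)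
    with True show ?thesis
      using IVT'[of f a 0 b] assms(1,2) by simp
  next
    case False
    with assms(3) have "f b < 0"
      by (simp add: mult_less_0_iff)
    with False show ?thesis
      using IVT2'[of f b 0 a] assms(1,2) by simp
  qed
  with \<open>f a \<noteq> 0\<close> \<open>f b \<noteq> 0\<close> show ?thesis
    by (metis order_le_less)
qed

lemma chebU_tilde_0: "chebU_tilde 0 = 1"
  by (simp add: chebU_tilde_def one_pCons pcompose_pCons)

lemma chebU_tilde_1: "chebU_tilde (Suc 0) = [:0, 1:]"
  by (simp add: chebU_tilde_def pcompose_pCons)

lemma chebU_tilde_Suc_Suc:
  "chebU_tilde (Suc (Suc n)) = [:0, 1:] * chebU_tilde (Suc n) - chebU_tilde n"
  by (simp add: chebU_tilde_def pcompose_diff pcompose_mult pcompose_pCons pcompose_smult)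

lemma degree_chebU_tilde: "degree (chebU_tilde n) \<le> n"
proof -
  have "degree (chebU n) \<le> n"
  proof (induction n rule: chebU.induct)
    case (3 n)
    then show ?case
      using degree_mult_le[of "[:0, 2:]" "chebU (Suc n)"]
      by (auto intro!: degree_diff_le)
  qed simp_all
  then show ?thesis
    by (simp add: chebU_tilde_def degree_pcompose)
qed

lemma poly_chebU_tilde_2: "poly (chebU_tilde n) 2 = of_nat n + 1"
  by (induction n rule: chebU.induct)
    (simp_all add: chebU_tilde_0 chebU_tilde_1 chebU_tilde_Suc_Suc algebra_simps)

lemma poly_chebU_tilde_minus_2: "poly (chebU_tilde n) (-2) = (-1) ^ n * (of_nat n + 1)"
proof (induction n rule: chebU.induct)
  case (3 n)
  then show ?case
    by (simp only: chebU_tilde_Suc_Suc poly_diff poly_mult) (simp add: algebra_simps)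
qed (simp_all add: chebU_tilde_0 chebU_tilde_1)

lemma poly_pderiv_chebU_tilde_2:
  "poly (pderiv (chebU_tilde n)) 2 = of_nat n * (of_nat n + 1) * (of_nat n + 2) / 6"
proof (induction n rule: chebU.induct)
  case (3 n)
  then show ?case
    using poly_chebU_tilde_2[of "Suc n"]
    by (simp add: chebU_tilde_Suc_Suc pderiv_diff pderiv_mult pderiv_pCons field_simps)
qed (simp_all add: chebU_tilde_0 chebU_tilde_1 pderiv_pCons)

lemma Phi_double_root_2:
  assumes "0 < n"
  shows "[:-2, 1:] ^ 2 dvd Phi n"
proof -
  obtain m where n: "n = Suc m"
    using assms gr0_implies_Suc by blast
  have "poly (Phi n) 2 = 0"
    using poly_chebU_tilde_2[of m] poly_chebU_tilde_2[of "Suc m"]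
    by (simp add: n Phi_def algebra_simps)
  moreover have "poly (pderiv (Phi n)) 2 = 0"
    using poly_chebU_tilde_2[of m] poly_chebU_tilde_2[of "Suc m"]
      poly_pderiv_chebU_tilde_2[of m] poly_pderiv_chebU_tilde_2[of "Suc m"]
    by (simp only: n Phi_def pderiv_add pderiv_mult poly_add poly_mult diff_Suc_1)
      (simp add: pderiv_pCons field_simps)
  ultimately show ?thesis
    by (rule square_linear_dvd_if_poly_pderiv_eq_0)
qed

lemma degree_Phi: "degree (Phi n) \<le> n + 2"
proof -
  have "degree [:- 4 * of_nat n, -6, of_nat n + 1 :: complex:] = 2"
    using of_nat_neq_0[of n, where ?'a = complex] by (simp add: add.commute)
  then have "degree ([:- 4 * of_nat n, -6, of_nat n + 1:] * chebU_tilde n) \<le> n + 2"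
    using degree_mult_le[of "[:- 4 * of_nat n, -6, of_nat n + 1:]" "chebU_tilde n"]
      degree_chebU_tilde[of n] by linarith
  moreover have "degree ([:4, 2:] * chebU_tilde (n - 1)) \<le> n + 2"
    using degree_mult_le[of "[:4, 2:]" "chebU_tilde (n - 1)"] degree_chebU_tilde[of "n - 1"]
    by simp
  ultimately show ?thesis
    unfolding Phi_def by (intro degree_add_le) simp_all
qed

lemma Phi_nonzero: "Phi n \<noteq> 0"
proof -
  have "poly (Phi n) (-2) = 16 * (-1) ^ n * of_nat (Suc n)"
    by (simp add: Phi_def poly_chebU_tilde_minus_2 algebra_simps)
  then have "poly (Phi n) (-2) \<noteq> 0"
    by (simp del: of_nat_Suc)
  then show ?thesis
    by auto
qed

lemma Phi_2: "Phi 2 = smult 3 ([:-2, 1:] ^ 2 * [:1, 1:] ^ 2)"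
  by (simp add: Phi_def numeral_2_eq_2 chebU_tilde_Suc_Suc chebU_tilde_1 chebU_tilde_0
      power2_eq_square one_pCons)

fun chebU_tilde_real :: "nat \<Rightarrow> real \<Rightarrow> real" where
  "chebU_tilde_real 0 x = 1"
| "chebU_tilde_real (Suc 0) x = x"
| "chebU_tilde_real (Suc (Suc n)) x = x * chebU_tilde_real (Suc n) x - chebU_tilde_real n x"

lemma poly_chebU_tilde_of_real:
  "poly (chebU_tilde n) (of_real x) = of_real (chebU_tilde_real n x)"
  by (induction n x rule: chebU_tilde_real.induct)
    (simp_all add: chebU_tilde_0 chebU_tilde_1 chebU_tilde_Suc_Suc)

lemma chebU_tilde_real_cos: "chebU_tilde_real n (2 * cos t) * sin t = sin (real (Suc n) * t)"
proof (induction n rule: chebU.induct)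
  case (3 n)
  have "chebU_tilde_real (Suc (Suc n)) (2 * cos t) * sin t
      = 2 * cos t * sin (real (Suc (Suc n)) * t) - sin (real (Suc n) * t)"
    using 3 by (simp add: algebra_simps)
  also have "\<dots> = sin (real (Suc (Suc n)) * t + t)"
    using sin_add[of "real (Suc (Suc n)) * t" t] sin_diff[of "real (Suc (Suc n)) * t" t]
    by (simp add: algebra_simps)
  finally show ?case
    by (simp add: algebra_simps)
qed (simp_all add: sin_double)

definition Phi_real :: "nat \<Rightarrow> real \<Rightarrow> real" where
  "Phi_real n x = ((real n + 1) * x\<^sup>2 - 6 * x - 4 * real n) * chebU_tilde_real n x
                 + 2 * (x + 2) * chebU_tilde_real (n - 1) x + 2 * (x + 2)"

lemma poly_Phi_of_real: "poly (Phi n) (of_real x) = of_real (Phi_real n x)"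
  by (simp add: Phi_def Phi_real_def poly_chebU_tilde_of_real algebra_simps power2_eq_square)

definition kappa :: "nat \<Rightarrow> real \<Rightarrow> real" where
  "kappa n p = (real n + 2) * (cos p)\<^sup>2 - 1"

definition Phi_trig :: "nat \<Rightarrow> real \<Rightarrow> real" where
  "Phi_trig n p = cos p ^ 3 * sin (real (Suc n) * p) - sin p * kappa n p * cos (real (Suc n) * p)"

lemma Phi_real_cos_double:
  assumes "sin p \<noteq> 0" and "cos p \<noteq> 0"
  shows "Phi_real (Suc m) (2 * cos (2 * p)) * cos p
       = 16 * sin (real (Suc (Suc m)) * p) * Phi_trig (Suc m) p"
proof -
  define s c S C where "s = sin p" and "c = cos p"
    and "S = sin (real (Suc (Suc m)) * p)" and "C = cos (real (Suc (Suc m)) * p)"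
  define x where "x = 2 * cos (2 * p)"
  have x: "x = 2 * (c\<^sup>2 - s\<^sup>2)"
    by (simp add: x_def s_def c_def cos_double)
  have sin_2p: "sin (2 * p) = 2 * s * c"
    by (simp add: s_def c_def sin_double)
  have U1: "chebU_tilde_real (Suc m) x * (2 * s * c) = 2 * S * C"
    using chebU_tilde_real_cos[of "Suc m" "2 * p"] sin_double[of "real (Suc (Suc m)) * p"]
    by (simp add: x_def S_def C_def mult.left_commute flip: sin_2p)
  have U0: "chebU_tilde_real m x * (2 * s * c) = 2 * S * C * (c\<^sup>2 - s\<^sup>2) - (C\<^sup>2 - S\<^sup>2) * (2 * s * c)"
  proof -
    have "real (Suc m) * (2 * p) = 2 * (real (Suc (Suc m)) * p) - 2 * p"
      by (simp add: algebra_simps)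
    then show ?thesis
      using chebU_tilde_real_cos[of m "2 * p"]
      by (simp add: x_def s_def c_def S_def C_def sin_diff sin_double cos_double flip: sin_2p)
  qed
  have "s\<^sup>2 + c\<^sup>2 = 1" "S\<^sup>2 + C\<^sup>2 = 1"
    by (simp_all add: s_def c_def S_def C_def)
  then have "Phi_real (Suc m) x * c * (2 * s * c)
      = 16 * S * (c ^ 3 * S - s * ((real (Suc m) + 2) * c\<^sup>2 - 1) * C) * (2 * s * c)"
    using U0 U1 unfolding Phi_real_def diff_Suc_1 x by algebra
  moreover have "2 * s * c \<noteq> 0"
    using assms by (simp add: s_def c_def)
  ultimately have "Phi_real (Suc m) x * c
      = 16 * S * (c ^ 3 * S - s * ((real (Suc m) + 2) * c\<^sup>2 - 1) * C)"
    by (metis mult_right_cancel)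
  then show ?thesis
    unfolding Phi_trig_def kappa_def x_def s_def c_def S_def C_def .
qed

fun chebU_tilde_hom :: "int \<Rightarrow> int \<Rightarrow> nat \<Rightarrow> int" where
  "chebU_tilde_hom a b 0 = 1"
| "chebU_tilde_hom a b (Suc 0) = a"
| "chebU_tilde_hom a b (Suc (Suc k)) = a * chebU_tilde_hom a b (Suc k) - b\<^sup>2 * chebU_tilde_hom a b k"

lemma of_int_chebU_tilde_hom:
  assumes "b \<noteq> 0"
  shows "of_int (chebU_tilde_hom a b k) = of_int b ^ k * chebU_tilde_real k (of_int a / of_int b)"
  using assms by (induction a b k rule: chebU_tilde_hom.induct) (simp_all add: field_simps power2_eq_square)

lemma chebU_tilde_hom_cong: "b dvd chebU_tilde_hom a b k - a ^ k"
proof (induction a b k rule: chebU_tilde_hom.induct)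
  case (3 a b k)
  have "chebU_tilde_hom a b (Suc (Suc k)) - a ^ Suc (Suc k)
      = a * (chebU_tilde_hom a b (Suc k) - a ^ Suc k) - b * (b * chebU_tilde_hom a b k)"
    by (simp add: algebra_simps power2_eq_square)
  then show ?case
    using 3 by simp
qed simp_all

lemma chebU_tilde_real_rational_root_Ints:
  assumes "x \<in> \<rat>" and "chebU_tilde_real n x = 0"
  shows "x \<in> \<int>"
proof -
  obtain a b where "b > 0" "coprime a b" and x: "x = of_int a / of_int b"
    using assms(1) by (rule Rats_cases') auto
  then have "chebU_tilde_hom a b n = 0"
    using assms(2) of_int_chebU_tilde_hom[of b a n] by simp
  then have "b dvd a ^ n"
    using chebU_tilde_hom_cong[of b a n] by (simp add: dvd_diff_commute)
  with \<open>coprime a b\<close> have "is_unit b"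
    by (metis coprime_absorb_right coprime_power_left_iff)
  with \<open>b > 0\<close> show ?thesis
    using x by simp
qed

definition node :: "nat \<Rightarrow> nat \<Rightarrow> real" where
  "node n k = real k * pi / (2 * real (Suc n))"

lemma node_less_iff [simp]: "node n k < node n k' \<longleftrightarrow> k < k'"
  by (simp add: node_def divide_less_cancel)

lemma node_le_iff [simp]: "node n k \<le> node n k' \<longleftrightarrow> k \<le> k'"
  by (simp add: node_def divide_le_cancel)

lemma node_eq_iff [simp]: "node n k = node n k' \<longleftrightarrow> k = k'"
  by (simp add: node_def)

lemma node_0 [simp]: "node n 0 = 0"
  by (simp add: node_def)

lemma node_nonneg [simp]: "0 \<le> node n k"
  using node_le_iff[of n 0 k] by simp

lemma node_pos_iff [simp]: "0 < node n k \<longleftrightarrow> 0 < k"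
  using node_less_iff[of n 0 k] by simp

lemma node_Suc_self: "node n (Suc n) = pi / 2"
  by (simp add: node_def del: of_nat_Suc)

lemma Suc_mult_node: "real (Suc n) * node n k = real k * pi / 2"
  by (simp add: node_def del: of_nat_Suc)

lemma node_less_pi_half: "k < Suc n \<Longrightarrow> node n k < pi / 2"
  using node_less_iff[of n k "Suc n"] by (simp only: node_Suc_self)

lemma node_le_pi_half: "k \<le> Suc n \<Longrightarrow> node n k \<le> pi / 2"
  using node_le_iff[of n k "Suc n"] by (simp only: node_Suc_self)

lemma sin_node_pos:
  assumes "0 < k" and "k \<le> Suc n"
  shows "0 < sin (node n k)"
proof (rule sin_gt_zero)
  show "0 < node n k"
    using assms(1) by simp
  show "node n k < pi"
    using node_le_pi_half[OF assms(2)] pi_gt_zero by linarith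
qed

lemma cos_node_pos: "k < Suc n \<Longrightarrow> 0 < cos (node n k)"
  using node_nonneg[of n k] node_less_pi_half[of k n] pi_gt_zero
  by (intro cos_gt_zero_pi) linarith+

lemma Phi_trig_even_node:
  "Phi_trig n (node n (2 * j)) = (-1) ^ Suc j * sin (node n (2 * j)) * kappa n (node n (2 * j))"
  unfolding Phi_trig_def Suc_mult_node by simp

lemma Phi_trig_odd_node:
  "Phi_trig n (node n (2 * j + 1)) = (-1) ^ j * cos (node n (2 * j + 1)) ^ 3"
proof -
  have "real (Suc n) * node n (2 * j + 1) = real j * pi + pi / 2"
    unfolding Suc_mult_node by (simp add: field_simps)
  then show ?thesis
    unfolding Phi_trig_def by (simp add: sin_add cos_add)
qed

lemma kappa_even_node_nonzero:
  assumes "n \<noteq> 2" and "1 \<le> j" and "2 * j < Suc n"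
  shows "kappa n (node n (2 * j)) \<noteq> 0"
proof
  define p where "p = node n (2 * j)"
  assume "kappa n p = 0"
  then have "(cos p)\<^sup>2 = 1 / (real n + 2)"
    by (simp add: kappa_def field_simps)
  then have x: "2 * cos (2 * p) = - 2 * real n / (real n + 2)"
    unfolding cos_double_cos by (simp add: field_simps)
  have "0 < 2 * p" "2 * p < pi"
    using assms node_less_pi_half[of "2 * j" n] by (simp_all add: p_def)
  then have "sin (2 * p) \<noteq> 0"
    using sin_gt_zero by fastforce
  moreover have "chebU_tilde_real n (2 * cos (2 * p)) * sin (2 * p) = 0"
  proof -
    have "real (Suc n) * (2 * p) = real (2 * j) * pi"
      using Suc_mult_node[of n "2 * j"] by (simp add: p_def)
    then show ?thesis
      unfolding chebU_tilde_real_cos by (simp only: sin_npi)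
  qed
  ultimately have "chebU_tilde_real n (- 2 * real n / (real n + 2)) = 0"
    by (simp add: x)
  then have "- 2 * real n / (real n + 2) \<in> \<int>"
    by (intro chebU_tilde_real_rational_root_Ints) simp_all
  then obtain a where a: "- 2 * real n / (real n + 2) = of_int a"
    by (rule Ints_cases)
  have "n \<ge> 1"
    using assms by simp
  then have "- 2 < real_of_int a" "real_of_int a < 0"
    by (simp_all flip: a add: field_simps)
  then have "a = -1"
    by linarith
  with a have "real n = 2"
    by (simp add: field_simps)
  with assms show False
    by simp
qed

(* For even n the cell to the right of the last even node n ends at pi/2, where Phi_trig
   vanishes; this lemma excludes that cell. *)
lemma kappa_node_self_neg:
  assumes "4 \<le> n"
  shows "kappa n (node n n) < 0"
proof -
  define t where "t = pi / (2 * real (Suc n))"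
  have "cos (node n n) = sin t"
    unfolding sin_cos_eq by (simp add: t_def node_def field_simps)
  moreover have "0 \<le> sin t"
    unfolding t_def by (rule sin_ge_zero) (simp_all add: field_simps)
  moreover have "sin t < 2 / real (Suc n)"
  proof -
    have "sin t \<le> t"
      by (rule sin_x_le_x) (simp add: t_def)
    also have "\<dots> = (pi / 2) / real (Suc n)"
      by (simp add: t_def)
    also have "\<dots> < 2 / real (Suc n)"
      using pi_less_4 by (intro divide_strict_right_mono) simp_all
    finally show ?thesis .
  qed
  ultimately have "(cos (node n n))\<^sup>2 < (2 / real (Suc n))\<^sup>2"
    by (simp add: power_strict_mono)
  then have "kappa n (node n n) < (real n + 2) * (2 / real (Suc n))\<^sup>2 - 1"
    unfolding kappa_def by simp
  also have "\<dots> \<le> 0"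
  proof -
    have "3 \<le> real n - 1"
      using assms by simp
    then have "3\<^sup>2 \<le> (real n - 1)\<^sup>2"
      by (rule power_mono) simp
    then have "4 * (real n + 2) \<le> (real n + 1)\<^sup>2"
      by (simp add: power2_eq_square algebra_simps)
    then show ?thesis
      by (simp add: power_divide field_simps)
  qed
  finally show ?thesis .
qed

lemma continuous_on_Phi_trig: "continuous_on S (Phi_trig n)"
  unfolding Phi_trig_def kappa_def by (intro continuous_intros)

lemma Phi_trig_root_near_even_node:
  assumes "n \<noteq> 2" and "1 \<le> j" and "2 * j \<le> Suc n"
  obtains p where "node n (2 * j - 1) < p" and "p < node n (2 * j + 1)" and "p < pi / 2"
    and "p \<noteq> node n (2 * j)" and "Phi_trig n p = 0"
proof -
  \<comment> \<open>The sign of \<open>K\<close> decides on which side of the even node \<open>Phi_trig\<close> changes sign.\<close>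
  define K where "K = kappa n (node n (2 * j))"
  have K_last: "K < 0" if "2 * j = Suc n"
    using that by (simp add: K_def kappa_def node_Suc_self)
  have "K \<noteq> 0"
    using K_last kappa_even_node_nonzero[OF assms(1,2)] assms(3) unfolding K_def
    by (cases "2 * j = Suc n") simp_all
  then consider (pos) "0 < K" | (neg) "K < 0"
    by linarith
  then show ?thesis
  proof cases
    case pos
    have "2 * j \<noteq> n"
      using kappa_node_self_neg[of n] pos assms(1,2) unfolding K_def by fastforce
    with pos K_last assms(3) have "2 * j + 1 < Suc n"
      by fastforce
    then have "Phi_trig n (node n (2 * j)) * Phi_trig n (node n (2 * j + 1))
        = - (sin (node n (2 * j)) * K * cos (node n (2 * j + 1)) ^ 3)"
      unfolding Phi_trig_even_node Phi_trig_odd_node K_def by (simp add: algebra_simps)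
    also have "\<dots> < 0"
      using pos \<open>2 * j + 1 < Suc n\<close> assms(2)
      by (simp add: sin_node_pos cos_node_pos)
    finally obtain p where "node n (2 * j) < p" "p < node n (2 * j + 1)" "Phi_trig n p = 0"
      using IVT_sign_change[of "node n (2 * j)" "node n (2 * j + 1)" "Phi_trig n",
          OF continuous_on_Phi_trig]
      by auto
    moreover have "node n (2 * j + 1) \<le> pi / 2"
      using \<open>2 * j + 1 < Suc n\<close> by (intro node_le_pi_half) simp
    moreover have "node n (2 * j - 1) < node n (2 * j)"
      using assms(2) by simp
    ultimately show ?thesis
      by (intro that[of p]; linarith)
  next
    case neg
    obtain i where j: "j = Suc i"
      using assms(2) by (cases j) auto
    then have odd: "2 * j - 1 = 2 * i + 1"
      by simp
    have "Phi_trig n (node n (2 * j - 1)) * Phi_trig n (node n (2 * j))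
        = cos (node n (2 * j - 1)) ^ 3 * sin (node n (2 * j)) * K"
      unfolding odd Phi_trig_even_node Phi_trig_odd_node K_def by (simp add: j algebra_simps)
    also have "\<dots> < 0"
      using neg assms(3) unfolding odd j
      by (simp add: sin_node_pos cos_node_pos mult_pos_neg)
    finally obtain p where "node n (2 * j - 1) < p" "p < node n (2 * j)" "Phi_trig n p = 0"
      using IVT_sign_change[of "node n (2 * j - 1)" "node n (2 * j)" "Phi_trig n",
          OF continuous_on_Phi_trig]
      by auto
    moreover have "node n (2 * j) \<le> pi / 2"
      using assms(3) by (rule node_le_pi_half)
    moreover have "node n (2 * j) < node n (2 * j + 1)"
      by simp
    ultimately show ?thesis
      by (intro that[of p]; linarith)
  qed
qed

lemma Phi_trig_roots_between_even_nodes: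
  assumes "n \<noteq> 2"
  obtains \<rho> where "strict_mono_on {1..Suc n div 2} \<rho>"
    and "\<And>j. j \<in> {1..Suc n div 2} \<Longrightarrow> 0 < \<rho> j \<and> \<rho> j < pi / 2 \<and> Phi_trig n (\<rho> j) = 0"
    and "\<And>i j. j \<in> {1..Suc n div 2} \<Longrightarrow> \<rho> j \<noteq> node n (2 * i)"
proof -
  define J where "J = {1..Suc n div 2}"
  have "\<forall>j\<in>J. \<exists>p. node n (2 * j - 1) < p \<and> p < node n (2 * j + 1) \<and> p < pi / 2
      \<and> p \<noteq> node n (2 * j) \<and> Phi_trig n p = 0"
  proof
    fix j
    assume "j \<in> J"
    then have "1 \<le> j" "2 * j \<le> Suc n"
      unfolding J_def by auto
    then obtain p where "node n (2 * j - 1) < p" "p < node n (2 * j + 1)" "p < pi / 2"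
      "p \<noteq> node n (2 * j)" "Phi_trig n p = 0"
      by (rule Phi_trig_root_near_even_node[OF assms])
    then show "\<exists>p. node n (2 * j - 1) < p \<and> p < node n (2 * j + 1) \<and> p < pi / 2
      \<and> p \<noteq> node n (2 * j) \<and> Phi_trig n p = 0"
      by blast
  qed
  then obtain \<rho> where \<rho>: "\<And>j. j \<in> J \<Longrightarrow> node n (2 * j - 1) < \<rho> j \<and> \<rho> j < node n (2 * j + 1)
      \<and> \<rho> j < pi / 2 \<and> \<rho> j \<noteq> node n (2 * j) \<and> Phi_trig n (\<rho> j) = 0"
    by metis
  have "strict_mono_on J \<rho>"
  proof (rule strict_mono_onI)
    fix j j'
    assume "j \<in> J" "j' \<in> J" "j < j'"
    then have "\<rho> j < node n (2 * j + 1)" "node n (2 * j' - 1) < \<rho> j'"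
      using \<rho>[of j] \<rho>[of j'] by simp_all
    moreover have "node n (2 * j + 1) \<le> node n (2 * j' - 1)"
      using \<open>j < j'\<close> by simp
    ultimately show "\<rho> j < \<rho> j'"
      by linarith
  qed
  moreover have "0 < \<rho> j \<and> \<rho> j < pi / 2 \<and> Phi_trig n (\<rho> j) = 0" if "j \<in> J" for j
    using \<rho>[OF that] by (fastforce intro: order.strict_trans1[OF node_nonneg])
  moreover have "\<rho> j \<noteq> node n (2 * i)" if "j \<in> J" for i j
  proof
    assume "\<rho> j = node n (2 * i)"
    with \<rho>[OF that] have "node n (2 * j - 1) < node n (2 * i)" "node n (2 * i) < node n (2 * j + 1)"
      "node n (2 * i) \<noteq> node n (2 * j)"
      by auto
    then have "2 * j - 1 < 2 * i" "2 * i < 2 * j + 1" "i \<noteq> j"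
      by simp_all
    then show False
      by linarith
  qed
  ultimately show ?thesis
    using that unfolding J_def by blast
qed

lemma Phi_angle_roots:
  assumes "n \<noteq> 2"
  obtains Z where "finite Z" and "card Z = n" and "Z \<subseteq> {0<..<pi / 2}"
    and "\<And>p. p \<in> Z \<Longrightarrow> sin (real (Suc n) * p) * Phi_trig n p = 0"
proof -
  obtain \<rho> where mono: "strict_mono_on {1..Suc n div 2} \<rho>"
    and \<rho>: "\<And>j. j \<in> {1..Suc n div 2} \<Longrightarrow> 0 < \<rho> j \<and> \<rho> j < pi / 2 \<and> Phi_trig n (\<rho> j) = 0"
    and off_nodes: "\<And>i j. j \<in> {1..Suc n div 2} \<Longrightarrow> \<rho> j \<noteq> node n (2 * i)"
    using Phi_trig_roots_between_even_nodes[OF assms] by blast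
  define A where "A = (\<lambda>j. node n (2 * j)) ` {1..n div 2}"
  define B where "B = \<rho> ` {1..Suc n div 2}"
  have "card A = n div 2"
    unfolding A_def by (subst card_image) (auto intro: inj_onI)
  moreover have "card B = Suc n div 2"
    unfolding B_def using mono by (simp add: card_image strict_mono_on_imp_inj_on)
  moreover have "A \<inter> B = {}"
    unfolding A_def B_def disjoint_iff using off_nodes by (metis imageE)
  moreover have "A \<subseteq> {0<..<pi / 2}"
  proof
    fix p
    assume "p \<in> A"
    then obtain j where "1 \<le> j" "j \<le> n div 2" "p = node n (2 * j)"
      unfolding A_def by auto
    moreover from \<open>j \<le> n div 2\<close> have "2 * j < Suc n"
      by linarith
    ultimately show "p \<in> {0<..<pi / 2}"
      using node_less_pi_half[of "2 * j" n] by simp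
  qed
  moreover have "B \<subseteq> {0<..<pi / 2}"
    unfolding B_def using \<rho> by auto
  moreover have "sin (real (Suc n) * p) * Phi_trig n p = 0" if "p \<in> A \<union> B" for p
  proof (cases "p \<in> A")
    case True
    then obtain j where "p = node n (2 * j)"
      unfolding A_def by blast
    then have "real (Suc n) * p = real j * pi"
      using Suc_mult_node[of n "2 * j"] by simp
    then show ?thesis
      by simp
  next
    case False
    with that show ?thesis
      using \<rho> unfolding B_def by auto
  qed
  ultimately show ?thesis
    using that[of "A \<union> B"] by (simp add: card_Un_disjoint A_def B_def)
qed

lemma Phi_roots_exist:
  assumes "0 < n" and "n \<noteq> 2"
  obtains X where "finite X" and "card X = n" and "2 \<notin> X" and "\<forall>x\<in>X. poly (Phi n) x = 0"
proof -
  obtain Z where "finite Z" "card Z = n" and Z: "Z \<subseteq> {0<..<pi / 2}"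
    and roots: "\<And>p. p \<in> Z \<Longrightarrow> sin (real (Suc n) * p) * Phi_trig n p = 0"
    using Phi_angle_roots[OF assms(2)] by blast
  define f where "f p = complex_of_real (2 * cos (2 * p))" for p
  have cos_eq: "p = q" if "0 < p" "p < pi / 2" "0 \<le> q" "q < pi / 2" "cos (2 * p) = cos (2 * q)" for p q
    using cos_inj_pi[of "2 * p" "2 * q"] that by simp
  have "inj_on f Z"
  proof (rule inj_onI)
    fix p q
    assume "p \<in> Z" "q \<in> Z" "f p = f q"
    show "p = q"
      by (rule cos_eq) (use Z \<open>p \<in> Z\<close> \<open>q \<in> Z\<close> \<open>f p = f q\<close> in \<open>auto simp: f_def\<close>)
  qed
  moreover have "2 \<notin> f ` Z"
  proof
    assume "2 \<in> f ` Z"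
    then obtain p where "p \<in> Z" "cos (2 * p) = cos (2 * 0)"
      unfolding f_def by auto
    then show False
      using Z cos_eq[of p 0] by auto
  qed
  moreover have "poly (Phi n) (f p) = 0" if "p \<in> Z" for p
  proof -
    obtain m where n: "n = Suc m"
      using assms(1) gr0_implies_Suc by blast
    have "0 < sin p" "0 < cos p"
      using Z that by (auto intro!: sin_gt_zero cos_gt_zero_pi)
    then have "Phi_real n (2 * cos (2 * p)) * cos p = 0"
      using Phi_real_cos_double[of p m] roots[OF that] unfolding n by simp
    with \<open>0 < cos p\<close> show ?thesis
      unfolding f_def poly_Phi_of_real by simp
  qed
  ultimately show ?thesis
    using that[of "f ` Z"] \<open>finite Z\<close> \<open>card Z = n\<close> by (simp add: card_image)
qed

theorem propositionB6:
  shows "(\<forall>n::nat. (n = 1 \<or> n \<ge> 3) \<longrightarrow>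
            (\<forall>z::complex. poly (Phi n) z = 0 \<and> z \<noteq> 2 \<longrightarrow> order z (Phi n) = 1))
         \<and> Phi 2 = smult 3 ([:-2, 1:]^2 * [:1, 1:]^2)"
proof (intro conjI allI impI)
  fix n :: nat and z :: complex
  assume "n = 1 \<or> n \<ge> 3" and z: "poly (Phi n) z = 0 \<and> z \<noteq> 2"
  then have "0 < n" "n \<noteq> 2"
    by auto
  then obtain X where "finite X" "card X = n" "2 \<notin> X" "\<forall>x\<in>X. poly (Phi n) x = 0"
    by (rule Phi_roots_exist)
  with z show "order z (Phi n) = 1"
    using Phi_nonzero Phi_double_root_2[OF \<open>0 < n\<close>] degree_Phi[of n]
    by (intro order_eq_1_if_double_root_and_enough_roots[where X = X and a = 2]) auto
qed (fact Phi_2)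

end
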